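(* Let $P$ be a program and $\sigma\in C_{\mathrm{Power}}(P)$ a Power computation. Then a load $(t,i)$ reads its value from a store $(t,i')$ via an early-read transition if and only if (1) $\sigma=\sigma_1\cdot(\mathrm{load},t,i,a)\cdot\sigma_2\cdot(\mathrm{commit},t,i',k,a)\cdot\sigma_3$ for some $k$ and some $i'\in\{1,\dots,i-1\}$, and (2) $\sigma_3$ contains no event of the form $(\mathrm{commit},t,j,k',a)$ with $j\in\{i'+1,\dots,i-1\}$ and arbitrary $k'$.
   Context: Programs. Fix a finite set $D$ of values, which also serve as addresses, with $0\in D$, and a finite set $\mathit{Reg}$ of registers taking values in $D$. Expressions are built from constants in $D$, registers, and functions over $D\cup\{\bot\}$ that return $\bot$ iff some argument is $\bot$. Commands are loads $r\leftarrow \mathrm{mem}[e]$, stores $\mathrm{mem}[e]\leftarrow e'$, assignments $r\leftarrow e$, and $\mathrm{assume}(e)$. A thread is a finite automaton whose transitions (instructions) are labeled by commands; a program is a finite sequence of threads with ids $1,\dots,|P|$. $(t,i)$ denotes the $i$-th fetched instruction of thread $t$. Power semantics. A state consists of, for each thread $t$, a runtime state $(F,C,L)$ ($F$ the sequence of fetched instructions, $C$ the set of committed indices, $L$ mapping each index to $\bot$ or to the store read by the load there: an initial store $\mathrm{init}_a$ of value $0$ to $a$, or a pair $(t',i')$), and a storage state $(co,prop)$ ($co$ assigns rational coherence keys to committed stores, initial stores have key $0$; $prop(t,a)$ is the last store to $a$ propagated to $t$, initially $\mathrm{init}_a$). Register values for instruction $(t,i)$ come from the latest earlier fetched assignment or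 load to the register ($0$ if none; a load gives $\bot$ if unsatisfied, $0$ if it read an initial store, else the value of the store read); $\mathrm{addr}$ and $\mathrm{val}$ denote evaluated address/value arguments. Address/data dependencies are earlier instructions an address/value depends on via registers; control dependencies are earlier assumes. Transitions: (fetch) append an instruction of $T_t$ continuing from the last fetched one's target state, event $(\mathrm{fetch},t,\text{instr})$; (load from memory) load $i$ with $L[i]=\bot$ and address $a\ne\bot$: $L[i]:=prop(t,a)$, event $(\mathrm{load},t,i,a)$; (early read) same event, if the greatest $i'<i$ that is a store with address in $\{a,\bot\}$ has address $a$, value $\ne\bot$ and is uncommitted: $L[i]:=(t,i')$; (commit) uncommitted $i$ with committed address/data/control dependencies, address and value $\ne\bot$, all earlier instructions with the same or unknown address committed, $L[i]\ne\bot$ for loads, value $\ne0$ for assumes: event $(\mathrm{commit},t,i)$; for a store additionally a fresh key $k$ is set as $co(t,i)$, event $(\mathrm{commit},t,i,k,a)$, immediately followed by propagation to $t$; (propagate) committed store $(t',i')$ to $a$ with $co(prop(t,a))<co(t',i')$: $prop(t,a):=(t',i')$, event $(\mathrm{prop},t,t',i',a)$. Final states: all fetched instructions committed; for loads $i'<i$ of a thread to the same address, $co(L[i'])\le co(L[i])$; for a store $i'$ and later load $i$ of a thread to the same address, $co(t,i')\le co(L[i])$. $C_{\mathrm{Power}}(P)$ is the set of event sequences leading from the initial state (nothing fetched) to a final state. *)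

theory Defs
  imports Complex_Main
begin

text \<open>A function over D extended strictly to D \<union> {bot} (bot iff some argument is bot)
  is determined by its restriction to D, which is what Fn stores.\<close>

datatype ('d,'r) expr = Const 'd | Reg 'r | Fn "'d list \<Rightarrow> 'd" "('d,'r) expr list"

fun eval :: "('r \<Rightarrow> 'd option) \<Rightarrow> ('d,'r) expr \<Rightarrow> 'd option" where
  "eval \<rho> (Const d) = Some d"
| "eval \<rho> (Reg r) = \<rho> r"
| "eval \<rho> (Fn f es) =
     (if (\<forall>e\<in>set es. eval \<rho> e \<noteq> None) then Some (f (map (\<lambda>e. the (eval \<rho> e)) es)) else None)"

fun regs :: "('d,'r) expr \<Rightarrow> 'r set" where
  "regs (Const d) = {}"
| "regs (Reg r) = {r}"
| "regs (Fn f es) = (\<Union>e\<in>set es. regs e)"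

datatype ('d,'r) cmd =
    Load 'r "('d,'r) expr"
  | Store "('d,'r) expr" "('d,'r) expr" \<comment> \<open>mem[e] <- e'\<close>
  | Assign 'r "('d,'r) expr"
  | Assume "('d,'r) expr"

type_synonym ('q,'d,'r) instr = "'q \<times> ('d,'r) cmd \<times> 'q"

record ('q,'d,'r) thread =
  tinit :: 'q
  ttrans :: "('q,'d,'r) instr set"

type_synonym ('q,'d,'r) program = "('q,'d,'r) thread list"

definition thr :: "('q,'d,'r) program \<Rightarrow> nat \<Rightarrow> ('q,'d,'r) thread" where
  "thr P t = P ! (t - 1)"

definition is_tid :: "('q,'d,'r) program \<Rightarrow> nat \<Rightarrow> bool" where
  "is_tid P t \<longleftrightarrow> 1 \<le> t \<and> t \<le> length P"

text \<open>Stores that a load may read: the initial store init_a, or a store (t',i').\<close>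
datatype 'd sref = Init 'd | St nat nat

record ('q,'d,'r) runtime =
  F :: "('q,'d,'r) instr list"     \<comment> \<open>fetched instructions; index i (1-based) is F ! (i-1)\<close>
  C :: "nat set"
  L :: "nat \<Rightarrow> 'd sref option"     \<comment> \<open>None = unsatisfied (bot)\<close>

record ('q,'d,'r) pstate =
  rt :: "nat \<Rightarrow> ('q,'d,'r) runtime"
  co :: "nat \<times> nat \<Rightarrow> rat option"     \<comment> \<open>coherence keys of committed stores\<close>
  prp :: "nat \<Rightarrow> 'd \<Rightarrow> 'd sref"

datatype ('q,'d,'r) event =
    EFetch nat "('q,'d,'r) instr"
  | ELoad nat nat 'd
  | ECommit nat nat
  | ECommitSt nat nat rat 'd
  | EProp nat nat nat 'd

definition nF :: "('q,'d,'r) pstate \<Rightarrow> nat \<Rightarrow> nat" where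
  "nF s t = length (F (rt s t))"

definition valid_idx :: "('q,'d,'r) pstate \<Rightarrow> nat \<Rightarrow> nat \<Rightarrow> bool" where
  "valid_idx s t i \<longleftrightarrow> 1 \<le> i \<and> i \<le> nF s t"

definition cmd_of :: "('q,'d,'r) pstate \<Rightarrow> nat \<Rightarrow> nat \<Rightarrow> ('d,'r) cmd" where
  "cmd_of s t i = fst (snd (F (rt s t) ! (i - 1)))"

fun writes :: "'r \<Rightarrow> ('d,'r) cmd \<Rightarrow> bool" where
  "writes r (Load r' e) = (r' = r)"
| "writes r (Assign r' e) = (r' = r)"
| "writes r _ = False"

fun is_load :: "('d,'r) cmd \<Rightarrow> bool" where
  "is_load (Load r e) = True" | "is_load _ = False"
fun is_store :: "('d,'r) cmd \<Rightarrow> bool" where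
  "is_store (Store e e') = True" | "is_store _ = False"
fun is_assume :: "('d,'r) cmd \<Rightarrow> bool" where
  "is_assume (Assume e) = True" | "is_assume _ = False"
definition is_mem :: "('d,'r) cmd \<Rightarrow> bool" where
  "is_mem c \<longleftrightarrow> is_load c \<or> is_store c"

definition provider :: "('q,'d,'r) pstate \<Rightarrow> nat \<Rightarrow> nat \<Rightarrow> 'r \<Rightarrow> nat option" where
  "provider s t i r =
     (if \<exists>j. valid_idx s t j \<and> j < i \<and> writes r (cmd_of s t j)
      then Some (GREATEST j. valid_idx s t j \<and> j < i \<and> writes r (cmd_of s t j))
      else None)"

text \<open>Register values, computed with a fuel bound (the dependency chains in any
  reachable state are acyclic and shorter than the number of fetched instructions;
  running out of fuel yields bot).\<close>
primrec regval :: "nat \<Rightarrow> ('q,'d::zero,'r) pstate \<Rightarrow> nat \<Rightarrow> nat \<Rightarrow> 'r \<Rightarrow> 'd option" where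
  "regval 0 s t i r = None"
| "regval (Suc n) s t i r =
     (case provider s t i r of
        None \<Rightarrow> Some 0
      | Some j \<Rightarrow>
          (case cmd_of s t j of
             Assign r' e \<Rightarrow> eval (regval n s t j) e
           | Load r' e \<Rightarrow>
               (case L (rt s t) j of
                  None \<Rightarrow> None
                | Some (Init a) \<Rightarrow> Some 0
                | Some (St t' i') \<Rightarrow>
                    (case cmd_of s t' i' of
                       Store ea ev \<Rightarrow> eval (regval n s t' i') ev
                     | _ \<Rightarrow> None))
           | _ \<Rightarrow> None))"

definition fuel :: "('q,'d,'r) program \<Rightarrow> ('q,'d,'r) pstate \<Rightarrow> nat" where
  "fuel P s = Suc (\<Sum>t=1..length P. nF s t)"

definition rv :: "('q,'d::zero,'r) program \<Rightarrow> ('q,'d,'r) pstate \<Rightarrow> nat \<Rightarrow> nat \<Rightarrow> 'r \<Rightarrow> 'd option" where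
  "rv P s t i = regval (fuel P s) s t i"

text \<open>addr: evaluated address argument (None = bot, also for non-memory instructions).\<close>
definition addr :: "('q,'d::zero,'r) program \<Rightarrow> ('q,'d,'r) pstate \<Rightarrow> nat \<Rightarrow> nat \<Rightarrow> 'd option" where
  "addr P s t i =
     (case cmd_of s t i of
        Load r e \<Rightarrow> eval (rv P s t i) e
      | Store e e' \<Rightarrow> eval (rv P s t i) e
      | _ \<Rightarrow> None)"

text \<open>val: evaluated value argument (for a load: the value it read, bot if unsatisfied).\<close>
definition val :: "('q,'d::zero,'r) program \<Rightarrow> ('q,'d,'r) pstate \<Rightarrow> nat \<Rightarrow> nat \<Rightarrow> 'd option" where
  "val P s t i =
     (case cmd_of s t i of
        Store e e' \<Rightarrow> eval (rv P s t i) e'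
      | Assign r e \<Rightarrow> eval (rv P s t i) e
      | Assume e \<Rightarrow> eval (rv P s t i) e
      | Load r e \<Rightarrow>
          (case L (rt s t) i of
             None \<Rightarrow> None
           | Some (Init a) \<Rightarrow> Some 0
           | Some (St t' i') \<Rightarrow>
               (case cmd_of s t' i' of
                  Store ea ev \<Rightarrow> eval (rv P s t' i') ev
                | _ \<Rightarrow> None)))"

definition expr_deps :: "('q,'d,'r) pstate \<Rightarrow> nat \<Rightarrow> nat \<Rightarrow> ('d,'r) expr \<Rightarrow> nat set" where
  "expr_deps s t i e = {j. \<exists>r\<in>regs e. provider s t i r = Some j}"

definition addr_deps :: "('q,'d,'r) pstate \<Rightarrow> nat \<Rightarrow> nat \<Rightarrow> nat set" where
  "addr_deps s t i =
     (case cmd_of s t i of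
        Load r e \<Rightarrow> expr_deps s t i e
      | Store e e' \<Rightarrow> expr_deps s t i e
      | _ \<Rightarrow> {})"

definition data_deps :: "('q,'d,'r) pstate \<Rightarrow> nat \<Rightarrow> nat \<Rightarrow> nat set" where
  "data_deps s t i =
     (case cmd_of s t i of
        Store e e' \<Rightarrow> expr_deps s t i e'
      | Assign r e \<Rightarrow> expr_deps s t i e
      | Assume e \<Rightarrow> expr_deps s t i e
      | _ \<Rightarrow> {})"

definition ctrl_deps :: "('q,'d,'r) pstate \<Rightarrow> nat \<Rightarrow> nat \<Rightarrow> nat set" where
  "ctrl_deps s t i = {j. valid_idx s t j \<and> j < i \<and> is_assume (cmd_of s t j)}"

fun co_of :: "('q,'d,'r) pstate \<Rightarrow> 'd sref \<Rightarrow> rat" where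
  "co_of s (Init a) = 0"
| "co_of s (St t i) = the (co s (t, i))"

definition commit_enabled :: "('q,'d::zero,'r) program \<Rightarrow> ('q,'d,'r) pstate \<Rightarrow> nat \<Rightarrow> nat \<Rightarrow> bool" where
  "commit_enabled P s t i \<longleftrightarrow>
     is_tid P t \<and> valid_idx s t i \<and> i \<notin> C (rt s t) \<and>
     addr_deps s t i \<union> data_deps s t i \<union> ctrl_deps s t i \<subseteq> C (rt s t) \<and>
     (is_mem (cmd_of s t i) \<longrightarrow> addr P s t i \<noteq> None) \<and>
     val P s t i \<noteq> None \<and>
     (is_mem (cmd_of s t i) \<longrightarrow>
        (\<forall>j. valid_idx s t j \<and> j < i \<and> is_mem (cmd_of s t j) \<and>
             (addr P s t j = addr P s t i \<or> addr P s t j = None) \<longrightarrow> j \<in> C (rt s t))) \<and>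
     (is_load (cmd_of s t i) \<longrightarrow> L (rt s t) i \<noteq> None) \<and>
     (is_assume (cmd_of s t i) \<longrightarrow> val P s t i \<noteq> Some 0)"

definition upd_rt :: "('q,'d,'r) pstate \<Rightarrow> nat \<Rightarrow> ('q,'d,'r) runtime \<Rightarrow> ('q,'d,'r) pstate" where
  "upd_rt s t r = s\<lparr>rt := (rt s)(t := r)\<rparr>"

definition last_target :: "('q,'d,'r) program \<Rightarrow> ('q,'d,'r) pstate \<Rightarrow> nat \<Rightarrow> 'q" where
  "last_target P s t =
     (if F (rt s t) = [] then tinit (thr P t) else snd (snd (last (F (rt s t)))))"

definition load_mem_step ::
  "('q,'d::zero,'r) program \<Rightarrow> ('q,'d,'r) pstate \<Rightarrow> nat \<Rightarrow> nat \<Rightarrow> 'd \<Rightarrow> ('q,'d,'r) pstate \<Rightarrow> bool" where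
  "load_mem_step P s t i a s' \<longleftrightarrow>
     is_tid P t \<and> valid_idx s t i \<and> is_load (cmd_of s t i) \<and> L (rt s t) i = None \<and>
     addr P s t i = Some a \<and>
     s' = upd_rt s t ((rt s t)\<lparr>L := (L (rt s t))(i := Some (prp s t a))\<rparr>)"

definition early_read_step ::
  "('q,'d::zero,'r) program \<Rightarrow> ('q,'d,'r) pstate \<Rightarrow> nat \<Rightarrow> nat \<Rightarrow> 'd \<Rightarrow> nat \<Rightarrow> ('q,'d,'r) pstate \<Rightarrow> bool" where
  "early_read_step P s t i a i' s' \<longleftrightarrow>
     is_tid P t \<and> valid_idx s t i \<and> is_load (cmd_of s t i) \<and> L (rt s t) i = None \<and>
     addr P s t i = Some a \<and>
     valid_idx s t i' \<and> i' < i \<and> is_store (cmd_of s t i') \<and>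
     (\<forall>j. i' < j \<and> j < i \<and> is_store (cmd_of s t j) \<longrightarrow>
          addr P s t j \<noteq> Some a \<and> addr P s t j \<noteq> None) \<and>
     addr P s t i' = Some a \<and> val P s t i' \<noteq> None \<and> i' \<notin> C (rt s t) \<and>
     s' = upd_rt s t ((rt s t)\<lparr>L := (L (rt s t))(i := Some (St t i'))\<rparr>)"

inductive step :: "('q,'d::zero,'r) program \<Rightarrow> ('q,'d,'r) pstate \<Rightarrow> ('q,'d,'r) event \<Rightarrow> ('q,'d,'r) pstate \<Rightarrow> bool"
  for P where
  fetch: "\<lbrakk> is_tid P t; ins \<in> ttrans (thr P t); fst ins = last_target P s t \<rbrakk>
          \<Longrightarrow> step P s (EFetch t ins) (upd_rt s t ((rt s t)\<lparr>F := F (rt s t) @ [ins]\<rparr>))"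
| load_mem: "load_mem_step P s t i a s' \<Longrightarrow> step P s (ELoad t i a) s'"
| early_read: "early_read_step P s t i a i' s' \<Longrightarrow> step P s (ELoad t i a) s'"
| commit: "\<lbrakk> commit_enabled P s t i; \<not> is_store (cmd_of s t i) \<rbrakk>
          \<Longrightarrow> step P s (ECommit t i) (upd_rt s t ((rt s t)\<lparr>C := insert i (C (rt s t))\<rparr>))"
| commit_store: "\<lbrakk> commit_enabled P s t i; is_store (cmd_of s t i); addr P s t i = Some a;
                  k \<noteq> 0; k \<notin> ran (co s); co_of s (prp s t a) < k \<rbrakk>
          \<Longrightarrow> step P s (ECommitSt t i k a)
                (s\<lparr>rt := (rt s)(t := (rt s t)\<lparr>C := insert i (C (rt s t))\<rparr>),
                   co := (co s)((t, i) := Some k),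
                   prp := (prp s)(t := (prp s t)(a := St t i))\<rparr>)"
| propagate: "\<lbrakk> is_tid P t; is_tid P t'; valid_idx s t' i'; i' \<in> C (rt s t');
               is_store (cmd_of s t' i'); addr P s t' i' = Some a;
               co_of s (prp s t a) < co_of s (St t' i') \<rbrakk>
          \<Longrightarrow> step P s (EProp t t' i' a) (s\<lparr>prp := (prp s)(t := (prp s t)(a := St t' i'))\<rparr>)"

definition init_state :: "('q,'d,'r) pstate" where
  "init_state = \<lparr>rt = (\<lambda>t. \<lparr>F = [], C = {}, L = (\<lambda>i. None)\<rparr>),
                 co = (\<lambda>x. None), prp = (\<lambda>t a. Init a)\<rparr>"

definition final :: "('q,'d::zero,'r) program \<Rightarrow> ('q,'d,'r) pstate \<Rightarrow> bool" where
  "final P s \<longleftrightarrow> (\<forall>t. is_tid P t \<longrightarrow>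
     (\<forall>i. valid_idx s t i \<longrightarrow> i \<in> C (rt s t)) \<and>
     (\<forall>i' i. valid_idx s t i' \<and> valid_idx s t i \<and> i' < i \<and>
        is_load (cmd_of s t i') \<and> is_load (cmd_of s t i) \<and> addr P s t i' = addr P s t i \<longrightarrow>
        co_of s (the (L (rt s t) i')) \<le> co_of s (the (L (rt s t) i))) \<and>
     (\<forall>i' i. valid_idx s t i' \<and> valid_idx s t i \<and> i' < i \<and>
        is_store (cmd_of s t i') \<and> is_load (cmd_of s t i) \<and> addr P s t i' = addr P s t i \<longrightarrow>
        co_of s (St t i') \<le> co_of s (the (L (rt s t) i))))"

definition is_run :: "('q,'d::zero,'r) program \<Rightarrow> ('q,'d,'r) pstate list \<Rightarrow> ('q,'d,'r) event list \<Rightarrow> bool" where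
  "is_run P ss \<sigma> \<longleftrightarrow> length ss = Suc (length \<sigma>) \<and> ss ! 0 = init_state \<and>
     (\<forall>n < length \<sigma>. step P (ss ! n) (\<sigma> ! n) (ss ! Suc n))"

definition C_Power :: "('q,'d::zero,'r) program \<Rightarrow> ('q,'d,'r) event list set" where
  "C_Power P = {\<sigma>. \<exists>ss. is_run P ss \<sigma> \<and> final P (last ss)}"

definition reads_early :: "('q,'d::zero,'r) program \<Rightarrow> ('q,'d,'r) pstate list \<Rightarrow> ('q,'d,'r) event list
     \<Rightarrow> nat \<Rightarrow> nat \<Rightarrow> nat \<Rightarrow> bool" where
  "reads_early P ss \<sigma> t i i' \<longleftrightarrow>
     (\<exists>n < length \<sigma>. \<exists>a. \<sigma> ! n = ELoad t i a \<and> early_read_step P (ss ! n) t i a i' (ss ! Suc n))"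

end

theory Submission
  imports Defs "HOL-Library.Sublist"
begin

text \<open>Steps only extend a state: fetched instructions, satisfied loads, commits and coherence keys
  are never revoked, so an address, once known, never changes, and the key of \<open>prop(t,a)\<close> only
  grows along a run.

  If \<open>(t,i)\<close> reads early from \<open>(t,i')\<close>, then \<open>i'\<close> is still uncommitted, so it commits later, with
  the load's address \<open>a\<close>; no store strictly between \<open>i'\<close> and \<open>i\<close> can commit to \<open>a\<close> afterwards,
  since at the time of the load all of them had known addresses different from \<open>a\<close>.

  Conversely, a read from memory would violate the final-state condition \<open>co(t,i') \<le> co(L[i])\<close>: the
  key read is at most the key of \<open>prop(t,a)\<close> when \<open>i'\<close> commits, which is below the fresh key \<open>k\<close>.
  An early read from some \<open>i'' < i'\<close> is impossible because \<open>i'\<close> has address \<open>a\<close>, and one from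
  \<open>i' < i''\<close> because stores to a common address commit in program order, so \<open>i''\<close> would commit
  to \<open>a\<close> after \<open>i'\<close>, i.e. in \<open>\<sigma>\<^sub>3\<close>.\<close>

lemma map_leI: "(\<And>x y. m x = Some y \<Longrightarrow> m' x = Some y) \<Longrightarrow> m \<subseteq>\<^sub>m m'"
  by (auto simp: map_le_def)

lemma map_leD: "m \<subseteq>\<^sub>m m' \<Longrightarrow> m x = Some y \<Longrightarrow> m' x = Some y"
  by (force simp: map_le_def)

lemma in_set_drop_conv_nth:
  "x \<in> set (drop n xs) \<longleftrightarrow> (\<exists>p. n \<le> p \<and> p < length xs \<and> xs ! p = x)"
  unfolding in_set_conv_nth
proof
  assume "\<exists>q < length (drop n xs). drop n xs ! q = x"
  then obtain q where "q < length (drop n xs)" "drop n xs ! q = x" by blast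
  then show "\<exists>p. n \<le> p \<and> p < length xs \<and> xs ! p = x" by (intro exI[of _ "n + q"]) auto
next
  assume "\<exists>p. n \<le> p \<and> p < length xs \<and> xs ! p = x"
  then obtain p where "n \<le> p" "p < length xs" "xs ! p = x" by blast
  then show "\<exists>q < length (drop n xs). drop n xs ! q = x" by (intro exI[of _ "p - n"]) auto
qed

lemma append_two_singletons_conv_nth:
  "(\<exists>xs ys zs. l = xs @ [x] @ ys @ [y] @ zs \<and> Q zs) \<longleftrightarrow>
   (\<exists>n m. n < m \<and> m < length l \<and> l ! n = x \<and> l ! m = y \<and> Q (drop (Suc m) l))"
proof
  assume "\<exists>xs ys zs. l = xs @ [x] @ ys @ [y] @ zs \<and> Q zs"
  then obtain xs ys zs where "l = xs @ [x] @ ys @ [y] @ zs" and "Q zs" by blast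
  then show "\<exists>n m. n < m \<and> m < length l \<and> l ! n = x \<and> l ! m = y \<and> Q (drop (Suc m) l)"
    by (intro exI[of _ "length xs"] exI[of _ "Suc (length xs + length ys)"]) (simp add: nth_append)
next
  assume "\<exists>n m. n < m \<and> m < length l \<and> l ! n = x \<and> l ! m = y \<and> Q (drop (Suc m) l)"
  then obtain n m where "n < m" "m < length l" "l ! n = x" "l ! m = y" "Q (drop (Suc m) l)" by blast
  moreover have "l = take n l @ [l ! n] @ take (m - Suc n) (drop (Suc n) l) @ [l ! m] @ drop (Suc m) l"
  proof -
    have "drop (Suc n) l = take (m - Suc n) (drop (Suc n) l) @ l ! m # drop (Suc m) l"
      using id_take_nth_drop[of "m - Suc n" "drop (Suc n) l"] \<open>n < m\<close> \<open>m < length l\<close> by simp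
    then show ?thesis
      using id_take_nth_drop[of n l] \<open>n < m\<close> \<open>m < length l\<close> by simp
  qed
  ultimately show "\<exists>xs ys zs. l = xs @ [x] @ ys @ [y] @ zs \<and> Q zs" by blast
qed

lemma eval_map_le:
  assumes "\<rho> \<subseteq>\<^sub>m \<rho>'" and "eval \<rho> e = Some v"
  shows "eval \<rho>' e = Some v"
  using assms(2)
proof (induction e arbitrary: v)
  case (Reg r)
  then show ?case using assms(1) by (simp add: map_leD)
next
  case (Fn f es)
  then have "\<forall>e\<in>set es. eval \<rho> e \<noteq> None" by (simp split: if_splits)
  with Fn.IH have "\<forall>e\<in>set es. eval \<rho>' e = eval \<rho> e" by fastforce
  with Fn.prems show ?case by (simp cong: map_cong split: if_splits)
qed simp

lemma provider_SomeD:
  assumes "provider s t i r = Some j"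
  shows "valid_idx s t j \<and> j < i \<and> writes r (cmd_of s t j)"
proof -
  from assms obtain j0 where j0: "valid_idx s t j0 \<and> j0 < i \<and> writes r (cmd_of s t j0)"
    and j: "j = (GREATEST j. valid_idx s t j \<and> j < i \<and> writes r (cmd_of s t j))"
    unfolding provider_def by (auto split: if_splits)
  from j0 show ?thesis unfolding j by (rule GreatestI_nat[where b = i]) auto
qed

lemma regval_Suc_fuel:
  "regval n s t i r = Some v \<Longrightarrow> regval (Suc n) s t i r = Some v"
proof (induction n arbitrary: t i r v)
  case (Suc n)
  have le: "regval n s t' i' \<subseteq>\<^sub>m regval (Suc n) s t' i'" for t' i'
    using Suc.IH by (rule map_leI)
  have "eval (regval n s t' i') e = Some w \<Longrightarrow> eval (regval (Suc n) s t' i') e = Some w"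
    for t' i' e w by (rule eval_map_le[OF le])
  with Suc.prems show ?case
    by (auto split: option.splits cmd.splits sref.splits)
qed simp

lemma regval_mono_fuel:
  assumes "regval n s t i r = Some v" and "n \<le> m"
  shows "regval m s t i r = Some v"
  using assms(2) by (induction m rule: dec_induct) (use assms(1) regval_Suc_fuel in auto)

section \<open>States only grow along a run\<close>

definition state_le :: "('q,'d,'r) pstate \<Rightarrow> ('q,'d,'r) pstate \<Rightarrow> bool" where
  "state_le s s' \<longleftrightarrow>
     (\<forall>t. prefix (F (rt s t)) (F (rt s' t)) \<and> L (rt s t) \<subseteq>\<^sub>m L (rt s' t) \<and> C (rt s t) \<subseteq> C (rt s' t)) \<and>
     co s \<subseteq>\<^sub>m co s'"

lemma state_le_refl: "state_le s s"
  by (simp add: state_le_def)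

lemma state_le_trans: "state_le s1 s2 \<Longrightarrow> state_le s2 s3 \<Longrightarrow> state_le s1 s3"
  unfolding state_le_def by (meson map_le_trans prefix_order.trans subset_trans)

lemma state_le_nF: "state_le s s' \<Longrightarrow> nF s t \<le> nF s' t"
  unfolding state_le_def nF_def by (simp add: prefix_length_le)

lemma state_le_fetched:
  assumes "state_le s s'" and "valid_idx s t i"
  shows state_le_valid_idx: "valid_idx s' t i" and state_le_cmd_of: "cmd_of s' t i = cmd_of s t i"
proof -
  from assms(1) obtain zs where "F (rt s' t) = F (rt s t) @ zs"
    unfolding state_le_def prefix_def by blast
  with assms(2) show "valid_idx s' t i" "cmd_of s' t i = cmd_of s t i"
    by (auto simp: valid_idx_def nF_def cmd_of_def nth_append)
qed

lemma same_fetched: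
  assumes "\<And>t. F (rt s' t) = F (rt s t)"
  shows "valid_idx s' = valid_idx s" and "cmd_of s' = cmd_of s"
  using assms by (simp_all add: fun_eq_iff valid_idx_def nF_def cmd_of_def)

lemma provider_state_le:
  assumes "state_le s s'" and "valid_idx s t i"
  shows "provider s' t i r = provider s t i r"
proof -
  have same: "valid_idx s' t j \<and> j < i \<and> writes r (cmd_of s' t j) \<longleftrightarrow>
        valid_idx s t j \<and> j < i \<and> writes r (cmd_of s t j)" for j
    using assms state_le_fetched[OF assms(1), of t j] by (auto simp: valid_idx_def)
  show ?thesis unfolding provider_def same ..
qed

definition loads_read_stores :: "('q,'d,'r) pstate \<Rightarrow> bool" where
  "loads_read_stores s \<longleftrightarrow>
     (\<forall>t i t' i'. L (rt s t) i = Some (St t' i') \<longrightarrow> valid_idx s t' i' \<and> is_store (cmd_of s t' i'))"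

lemma regval_state_le:
  assumes "state_le s s'" and "loads_read_stores s"
  shows "valid_idx s t i \<Longrightarrow> regval n s t i r = Some v \<Longrightarrow> regval n s' t i r = Some v"
proof (induction n arbitrary: t i r v)
  case (Suc n)
  have le: "regval n s t' i' \<subseteq>\<^sub>m regval n s' t' i'" if "valid_idx s t' i'" for t' i'
    using Suc.IH[OF that] by (rule map_leI)
  have ev: "eval (regval n s t' i') e = Some w \<Longrightarrow> eval (regval n s' t' i') e = Some w"
    if "valid_idx s t' i'" for t' i' e w
    by (rule eval_map_le[OF le[OF that]])
  note same_provider = provider_state_le[OF assms(1) Suc.prems(1)]
  show ?case
  proof (cases "provider s t i r")
    case None
    with Suc.prems same_provider show ?thesis by simp
  next
    case (Some j)
    have vj: "valid_idx s t j" using provider_SomeD[OF Some] by blast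
    have same_L: "L (rt s t) j = Some x \<Longrightarrow> L (rt s' t) j = Some x" for x
      using assms(1) unfolding state_le_def by (blast intro: map_leD)
    have src: "valid_idx s t' i' \<and> cmd_of s' t' i' = cmd_of s t' i'"
      if "L (rt s t) j = Some (St t' i')" for t' i'
      using assms that state_le_fetched[OF assms(1)] unfolding loads_read_stores_def by blast
    note regval_s = Suc.prems(2)
    show ?thesis
    proof (cases "cmd_of s t j")
      case (Load r' e)
      show ?thesis
      proof (cases "L (rt s t) j")
        case (Some x)
        with Load regval_s \<open>provider s t i r = Some j\<close> same_provider same_L[OF Some]
          state_le_fetched[OF assms(1) vj] src ev
        show ?thesis by (cases x) (auto split: cmd.splits)
      next
        case None
        from regval_s Some Load None show ?thesis by simp
      qed
    next
      case (Assign r' e)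
      with regval_s Some same_provider state_le_fetched[OF assms(1) vj] ev[OF vj]
      show ?thesis by simp
    next
      case (Store e e')
      from regval_s Some Store show ?thesis by simp
    next
      case (Assume e)
      from regval_s Some Assume show ?thesis by simp
    qed
  qed
qed simp

lemma addr_state_le:
  assumes "state_le s s'" and "loads_read_stores s" and "valid_idx s t i" and "addr P s t i = Some a"
  shows "addr P s' t i = Some a"
proof -
  have fuel: "fuel P s \<le> fuel P s'"
    unfolding fuel_def using state_le_nF[OF assms(1)] by (simp add: sum_mono)
  have "rv P s t i \<subseteq>\<^sub>m rv P s' t i"
    unfolding rv_def using regval_mono_fuel[OF regval_state_le[OF assms(1-3)] fuel] by (rule map_leI)
  then have ev: "eval (rv P s t i) e = Some a \<Longrightarrow> eval (rv P s' t i) e = Some a" for e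
    by (rule eval_map_le)
  have "cmd_of s' t i = cmd_of s t i" by (rule state_le_cmd_of[OF assms(1,3)])
  with assms(4) ev show ?thesis
    unfolding addr_def by (cases "cmd_of s t i") simp_all
qed

definition wf_state :: "('q,'d,'r) pstate \<Rightarrow> bool" where
  "wf_state s \<longleftrightarrow> loads_read_stores s \<and>
     (\<forall>t a t' i'. prp s t a = St t' i' \<longrightarrow> co s (t', i') \<noteq> None) \<and>
     (\<forall>t i. i \<in> C (rt s t) \<longrightarrow> valid_idx s t i) \<and>
     (\<forall>t i. co s (t, i) \<noteq> None \<longleftrightarrow> i \<in> C (rt s t) \<and> is_store (cmd_of s t i))"

lemma wf_state_init: "wf_state init_state"
  by (simp add: wf_state_def loads_read_stores_def init_state_def valid_idx_def nF_def)

lemma upd_rt_simps [simp]: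
  "rt (upd_rt s t r) = (rt s)(t := r)" "co (upd_rt s t r) = co s" "prp (upd_rt s t r) = prp s"
  by (simp_all add: upd_rt_def)

lemma step_state_le:
  assumes "step P s e s'" and "wf_state s"
  shows "state_le s s'"
  using assms(1)
proof cases
  case (commit_store t i a k)
  then have "co s (t, i) = None"
    using assms(2) by (auto simp: wf_state_def commit_enabled_def)
  with commit_store show ?thesis
    by (auto simp: state_le_def map_le_def)
qed (auto simp: state_le_def map_le_def load_mem_step_def early_read_step_def)

lemma step_wf_state:
  assumes step: "step P s e s'" and wf: "wf_state s"
  shows "wf_state s'"
proof -
  from wf have
    reads: "\<And>t i t' i'. L (rt s t) i = Some (St t' i') \<Longrightarrow> valid_idx s t' i' \<and> is_store (cmd_of s t' i')" and
    propagated: "\<And>t a t' i'. prp s t a = St t' i' \<Longrightarrow> co s (t', i') \<noteq> None" and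
    committed: "\<And>t i. i \<in> C (rt s t) \<Longrightarrow> valid_idx s t i" and
    keyed: "\<And>t i. co s (t, i) \<noteq> None \<longleftrightarrow> i \<in> C (rt s t) \<and> is_store (cmd_of s t i)"
    unfolding wf_state_def loads_read_stores_def by blast+
  note invariant = reads propagated committed keyed
  show ?thesis
    using step
  proof cases
    case (fetch t ins)
    have le: "state_le s s'" using step wf by (rule step_state_le)
    from fetch invariant state_le_valid_idx[OF le] state_le_cmd_of[OF le] show ?thesis
      unfolding wf_state_def loads_read_stores_def by auto
  next
    case (load_mem t i a)
    then have "F (rt s' t0) = F (rt s t0)" for t0 by (simp add: load_mem_step_def)
    from load_mem invariant same_fetched[OF this] show ?thesis
      unfolding wf_state_def loads_read_stores_def load_mem_step_def by auto
  next
    case (early_read t i a i')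
    then have "F (rt s' t0) = F (rt s t0)" for t0 by (simp add: early_read_step_def)
    from early_read invariant same_fetched[OF this] show ?thesis
      unfolding wf_state_def loads_read_stores_def early_read_step_def by auto
  next
    case (commit t i)
    then have "F (rt s' t0) = F (rt s t0)" for t0 by simp
    from commit invariant same_fetched[OF this] show ?thesis
      unfolding wf_state_def loads_read_stores_def commit_enabled_def by auto
  next
    case (commit_store t i a k)
    then have "F (rt s' t0) = F (rt s t0)" for t0 by simp
    from commit_store invariant same_fetched[OF this] show ?thesis
      unfolding wf_state_def loads_read_stores_def commit_enabled_def by auto
  next
    case (propagate t t' i' a)
    then have "F (rt s' t0) = F (rt s t0)" for t0 by simp
    from propagate invariant same_fetched[OF this] show ?thesis
      unfolding wf_state_def loads_read_stores_def by auto
  qed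
qed

lemma co_of_map_le:
  assumes "co s \<subseteq>\<^sub>m co s'" and "\<And>t i. x = St t i \<Longrightarrow> co s (t, i) \<noteq> None"
  shows "co_of s' x = co_of s x"
proof (cases x)
  case (St t i)
  with assms show ?thesis by (auto dest: map_leD)
qed simp

lemma step_prop_co_mono:
  assumes "step P s e s'" and "wf_state s"
  shows "co_of s (prp s t a) \<le> co_of s' (prp s' t a)"
proof -
  have "co s \<subseteq>\<^sub>m co s'"
    using step_state_le[OF assms] by (simp add: state_le_def)
  moreover have "co s (t', i') \<noteq> None" if "prp s t a = St t' i'" for t' i'
    using assms(2) that unfolding wf_state_def by blast
  ultimately have unchanged: "co_of s' (prp s t a) = co_of s (prp s t a)"
    by (rule co_of_map_le)
  from assms(1) show ?thesis
  proof cases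
    case (commit_store t' i' a' k)
    with unchanged show ?thesis by auto
  next
    case (propagate t' t'' i' a')
    with unchanged show ?thesis by auto
  qed (use unchanged in \<open>auto simp: load_mem_step_def early_read_step_def\<close>)
qed

lemma run_step: "is_run P ss \<sigma> \<Longrightarrow> n < length \<sigma> \<Longrightarrow> step P (ss ! n) (\<sigma> ! n) (ss ! Suc n)"
  unfolding is_run_def by blast

lemma run_wf_state:
  assumes "is_run P ss \<sigma>" and "n \<le> length \<sigma>"
  shows "wf_state (ss ! n)"
  using assms(2)
proof (induction n)
  case 0
  then show ?case using assms(1) wf_state_init by (simp add: is_run_def)
next
  case (Suc n)
  then have "n < length \<sigma>" and "wf_state (ss ! n)" by simp_all
  then show ?case by (rule step_wf_state[OF run_step[OF assms(1)]])
qed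

lemma run_state_le:
  assumes "is_run P ss \<sigma>" and "m \<le> n" and "n \<le> length \<sigma>"
  shows "state_le (ss ! m) (ss ! n)"
  using assms(2,3)
proof (induction n rule: dec_induct)
  case base
  show ?case by (rule state_le_refl)
next
  case (step k)
  then have "state_le (ss ! k) (ss ! Suc k)"
    using step_state_le[OF run_step[OF assms(1)] run_wf_state[OF assms(1)]] by simp
  moreover have "state_le (ss ! m) (ss ! k)" using step by simp
  ultimately show ?case by (blast intro: state_le_trans)
qed

lemma run_prop_co_mono:
  assumes "is_run P ss \<sigma>" and "m \<le> n" and "n \<le> length \<sigma>"
  shows "co_of (ss ! m) (prp (ss ! m) t a) \<le> co_of (ss ! n) (prp (ss ! n) t a)"
  using assms(2,3)
proof (induction n rule: dec_induct)
  case (step k)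
  then show ?case
    using step_prop_co_mono[OF run_step[OF assms(1)] run_wf_state[OF assms(1)], of k t a] by simp
qed simp

lemma run_co_of_prp:
  assumes "is_run P ss \<sigma>" and "m \<le> n" and "n \<le> length \<sigma>"
  shows "co_of (ss ! n) (prp (ss ! m) t a) = co_of (ss ! m) (prp (ss ! m) t a)"
proof (rule co_of_map_le)
  show "co (ss ! m) \<subseteq>\<^sub>m co (ss ! n)"
    using run_state_le[OF assms] by (simp add: state_le_def)
  have "wf_state (ss ! m)" using run_wf_state[OF assms(1), of m] assms(2,3) by simp
  then show "co (ss ! m) (t', i') \<noteq> None" if "prp (ss ! m) t a = St t' i'" for t' i'
    using that unfolding wf_state_def by blast
qed

lemma run_addr:
  assumes "is_run P ss \<sigma>" and "m \<le> n" and "n \<le> length \<sigma>"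
    and "valid_idx (ss ! m) t i" and "addr P (ss ! m) t i = Some a"
  shows "addr P (ss ! n) t i = Some a"
  using addr_state_le[OF run_state_le[OF assms(1-3)] _ assms(4,5)] run_wf_state[OF assms(1)] assms(2,3)
  by (simp add: wf_state_def)

lemma step_ECommitStD:
  assumes "step P s (ECommitSt t i k a) s'"
  shows "commit_enabled P s t i \<and> is_store (cmd_of s t i) \<and> addr P s t i = Some a \<and>
    co s' (t, i) = Some k \<and> co_of s (prp s t a) < k \<and> i \<in> C (rt s' t)"
  using assms by cases auto

lemma step_commits_store:
  assumes "step P s e s'" and "i \<notin> C (rt s t)" and "i \<in> C (rt s' t)" and "is_store (cmd_of s t i)"
  shows "\<exists>k a. e = ECommitSt t i k a"
  using assms(1)
proof cases
  case (fetch t' ins)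
  with assms(2,3) show ?thesis by (simp split: if_splits)
next
  case (load_mem t' i' a)
  with assms(2,3) show ?thesis by (simp add: load_mem_step_def split: if_splits)
next
  case (early_read t' i' a i'')
  with assms(2,3) show ?thesis by (simp add: early_read_step_def split: if_splits)
next
  case (commit t' i')
  with assms(2-4) show ?thesis by (simp split: if_splits)
next
  case (commit_store t' i' a k)
  with assms(2,3) show ?thesis by (simp split: if_splits)
next
  case (propagate t' t'' i' a)
  with assms(2,3) show ?thesis by simp
qed

lemma step_ELoadE:
  assumes "step P s (ELoad t i a) s'"
  obtains "load_mem_step P s t i a s'" | i' where "early_read_step P s t i a i' s'"
  using assms by cases auto

lemma commit_enabled_store_after_older:
  assumes "commit_enabled P s t i" and "is_store (cmd_of s t i)"
    and "valid_idx s t j" and "j < i" and "is_mem (cmd_of s t j)"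
    and "addr P s t j = addr P s t i \<or> addr P s t j = None"
  shows "j \<in> C (rt s t)"
  using assms unfolding commit_enabled_def is_mem_def by blast

lemma final_committed:
  assumes "final P s" and "is_tid P t" and "valid_idx s t i"
  shows "i \<in> C (rt s t)"
  using assms unfolding final_def by blast

lemma final_store_load_co:
  assumes "final P s" and "is_tid P t" and "valid_idx s t i'" and "valid_idx s t i" and "i' < i"
    and "is_store (cmd_of s t i')" and "is_load (cmd_of s t i)" and "addr P s t i' = addr P s t i"
  shows "co_of s (St t i') \<le> co_of s (the (L (rt s t) i))"
  using assms unfolding final_def by blast

lemma run_commit_of_store:
  assumes run: "is_run P ss \<sigma>" and "n \<le> N" and "N \<le> length \<sigma>"
    and "valid_idx (ss ! n) t i" and "is_store (cmd_of (ss ! n) t i)"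
    and "i \<notin> C (rt (ss ! n) t)" and "i \<in> C (rt (ss ! N) t)"
  shows "\<exists>m k a. n \<le> m \<and> m < N \<and> \<sigma> ! m = ECommitSt t i k a"
  using assms(2,3,7)
proof (induction N rule: dec_induct)
  case base
  with assms(6) show ?case by simp
next
  case (step m)
  show ?case
  proof (cases "i \<in> C (rt (ss ! m) t)")
    case True
    then obtain m' k a where "n \<le> m'" "m' < m" "\<sigma> ! m' = ECommitSt t i k a"
      using step.IH step.prems(1) by auto
    then show ?thesis using less_SucI by blast
  next
    case False
    have "is_store (cmd_of (ss ! m) t i)"
      using state_le_cmd_of[OF run_state_le[OF run, of n m] assms(4)] step.hyps step.prems(1) assms(5)
      by simp
    moreover have "step P (ss ! m) (\<sigma> ! m) (ss ! Suc m)"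
      using run_step[OF run] step.prems(1) by simp
    ultimately obtain k a where "\<sigma> ! m = ECommitSt t i k a"
      using step_commits_store False step.prems(2) by blast
    with step.hyps show ?thesis by auto
  qed
qed

lemma uncommitted_store_commits_later:
  assumes run: "is_run P ss \<sigma>" and fin: "final P (ss ! length \<sigma>)"
    and "n < length \<sigma>" and "is_tid P t" and valid: "valid_idx (ss ! n) t i"
    and store: "is_store (cmd_of (ss ! n) t i)" and addr: "addr P (ss ! n) t i = Some a"
    and uncommitted: "i \<notin> C (rt (ss ! n) t)"
  obtains m k where "n \<le> m" and "m < length \<sigma>" and "\<sigma> ! m = ECommitSt t i k a"
proof -
  have "i \<in> C (rt (ss ! length \<sigma>) t)"
    using final_committed[OF fin \<open>is_tid P t\<close>]
      state_le_valid_idx[OF run_state_le[OF run, of n "length \<sigma>"] valid] \<open>n < length \<sigma>\<close>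
    by simp
  then obtain m k a' where m: "n \<le> m" "m < length \<sigma>" and commit: "\<sigma> ! m = ECommitSt t i k a'"
    using run_commit_of_store[OF run _ _ valid store uncommitted, of "length \<sigma>"] \<open>n < length \<sigma>\<close>
    by auto
  have "addr P (ss ! m) t i = Some a"
    using run_addr[OF run, of n m] m valid addr by simp
  with step_ECommitStD[OF run_step[OF run \<open>m < length \<sigma>\<close>, unfolded commit]] have "a' = a" by simp
  with m commit that show ?thesis by simp
qed

lemma run_same_address_commits_in_order:
  assumes run: "is_run P ss \<sigma>" and "m' < m" and "m < length \<sigma>"
    and first: "\<sigma> ! m' = ECommitSt t j k' a" and second: "\<sigma> ! m = ECommitSt t i k a" and "0 < i"
  shows "j < i"
proof (rule ccontr)
  assume "\<not> j < i"
  have m': "m' < length \<sigma>" using assms(2,3) by simp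
  note at_m' = step_ECommitStD[OF run_step[OF run m', unfolded first]]
  note at_m = step_ECommitStD[OF run_step[OF run \<open>m < length \<sigma>\<close>, unfolded second]]
  have "i \<in> C (rt (ss ! Suc m') t)"
  proof (cases "i = j")
    case True
    with at_m' show ?thesis by simp
  next
    case False
    with \<open>\<not> j < i\<close> have "i < j" by simp
    have valid: "valid_idx (ss ! m') t i"
      using at_m' \<open>0 < i\<close> \<open>i < j\<close> by (auto simp: commit_enabled_def valid_idx_def)
    have le: "state_le (ss ! m') (ss ! m)" using run_state_le[OF run, of m' m] assms(2,3) by simp
    have "is_store (cmd_of (ss ! m') t i)"
      using at_m state_le_cmd_of[OF le valid] by simp
    moreover have "addr P (ss ! m') t i = Some a \<or> addr P (ss ! m') t i = None"
    proof (cases "addr P (ss ! m') t i")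
      case (Some b)
      then have "addr P (ss ! m) t i = Some b"
        using run_addr[OF run, of m' m] assms(2,3) valid by simp
      with at_m Some show ?thesis by simp
    qed simp
    ultimately have "i \<in> C (rt (ss ! m') t)"
      using commit_enabled_store_after_older[of P "ss ! m'" t j i] at_m' valid \<open>i < j\<close>
      by (auto simp: is_mem_def)
    then show ?thesis
      using run_state_le[OF run, of m' "Suc m'"] m' by (simp add: state_le_def subset_iff)
  qed
  then have "i \<in> C (rt (ss ! m) t)"
    using run_state_le[OF run, of "Suc m'" m] assms(2,3) by (simp add: state_le_def subset_iff)
  with at_m show False by (simp add: commit_enabled_def)
qed

lemma early_read_no_intervening_commit:
  assumes run: "is_run P ss \<sigma>"
    and early: "early_read_step P (ss ! n) t i a i' (ss ! Suc n)"
    and "n \<le> p" and "p < length \<sigma>" and "i' < j" and "j < i"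
  shows "\<sigma> ! p \<noteq> ECommitSt t j k a"
proof
  assume commit: "\<sigma> ! p = ECommitSt t j k a"
  have le: "state_le (ss ! n) (ss ! p)" using run_state_le[OF run, of n p] assms(3,4) by simp
  have "valid_idx (ss ! n) t j"
    using early \<open>j < i\<close> \<open>i' < j\<close> by (simp add: early_read_step_def valid_idx_def)
  moreover have "is_store (cmd_of (ss ! p) t j)" and addr_p: "addr P (ss ! p) t j = Some a"
    using step_ECommitStD[OF run_step[OF run \<open>p < length \<sigma>\<close>, unfolded commit]] by simp_all
  ultimately have "is_store (cmd_of (ss ! n) t j)" using state_le_cmd_of[OF le] by simp
  with early assms(5,6) obtain b where b: "addr P (ss ! n) t j = Some b" "b \<noteq> a"
    unfolding early_read_step_def by fastforce
  have "addr P (ss ! p) t j = Some b"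
    using run_addr[OF run, of n p] assms(3,4) \<open>valid_idx (ss ! n) t j\<close> b(1) by simp
  with addr_p b(2) show False by simp
qed

lemma memory_read_not_before_older_store_commit:
  assumes run: "is_run P ss \<sigma>" and fin: "final P (ss ! length \<sigma>)"
    and load: "load_mem_step P (ss ! n) t i a (ss ! Suc n)"
    and "n < m" and "m < length \<sigma>" and commit: "\<sigma> ! m = ECommitSt t i' k a"
    and "0 < i'" and "i' < i"
  shows False
proof -
  define N where "N = length \<sigma>"
  define x where "x = prp (ss ! n) t a"
  note at_m = step_ECommitStD[OF run_step[OF run \<open>m < length \<sigma>\<close>, unfolded commit]]
  have le_nm: "state_le (ss ! n) (ss ! m)" and le_nN: "state_le (ss ! n) (ss ! N)"
    and le_mN: "state_le (ss ! Suc m) (ss ! N)" and le_loadN: "state_le (ss ! Suc n) (ss ! N)"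
    using run_state_le[OF run] assms(4,5) unfolding N_def by simp_all
  from load have tid: "is_tid P t" and valid_i: "valid_idx (ss ! n) t i"
    and load_i: "is_load (cmd_of (ss ! n) t i)" and addr_i: "addr P (ss ! n) t i = Some a"
    and "L (rt (ss ! Suc n) t) i = Some x"
    unfolding load_mem_step_def x_def by simp_all
  then have L_N: "L (rt (ss ! N) t) i = Some x"
    using le_loadN by (auto simp: state_le_def dest: map_leD)
  have valid_i': "valid_idx (ss ! n) t i'"
    using valid_i assms(7,8) by (simp add: valid_idx_def)
  have "co_of (ss ! N) (St t i') \<le> co_of (ss ! N) x"
  proof -
    have "is_store (cmd_of (ss ! n) t i')"
      using at_m state_le_cmd_of[OF le_nm valid_i'] by simp
    moreover have "addr P (ss ! N) t i' = Some a"
      using run_addr[OF run, of m N] at_m state_le_valid_idx[OF le_nm valid_i'] assms(5)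
      unfolding N_def by simp
    moreover have "addr P (ss ! N) t i = Some a"
      using run_addr[OF run, of n N] valid_i addr_i assms(4,5) unfolding N_def by simp
    ultimately show ?thesis
      using final_store_load_co[OF fin[folded N_def] tid, of i' i] L_N \<open>i' < i\<close> load_i
        state_le_valid_idx[OF le_nN valid_i] state_le_valid_idx[OF le_nN valid_i']
        state_le_cmd_of[OF le_nN valid_i] state_le_cmd_of[OF le_nN valid_i']
      by simp
  qed
  moreover have "co_of (ss ! N) (St t i') = k"
    using at_m le_mN by (auto simp: state_le_def dest: map_leD)
  moreover have "co_of (ss ! N) x = co_of (ss ! n) x"
    using run_co_of_prp[OF run, of n N] assms(4,5) unfolding N_def x_def by simp
  moreover have "co_of (ss ! n) x \<le> co_of (ss ! m) (prp (ss ! m) t a)"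
    using run_prop_co_mono[OF run, of n m t a] assms(4,5) unfolding x_def by simp
  ultimately show False using at_m by simp
qed

lemma early_read_from_younger_store:
  assumes run: "is_run P ss \<sigma>" and fin: "final P (ss ! length \<sigma>)"
    and early: "early_read_step P (ss ! n) t i a i'' (ss ! Suc n)" and "n < length \<sigma>"
    and "m < length \<sigma>" and commit: "\<sigma> ! m = ECommitSt t i' k a" and "0 < i'" and "i' < i''"
  obtains m' k' where "m < m'" and "m' < length \<sigma>" and "\<sigma> ! m' = ECommitSt t i'' k' a"
proof -
  from early have tid: "is_tid P t" and valid: "valid_idx (ss ! n) t i''"
    and store: "is_store (cmd_of (ss ! n) t i'')" and addr: "addr P (ss ! n) t i'' = Some a"
    and uncommitted: "i'' \<notin> C (rt (ss ! n) t)"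
    unfolding early_read_step_def by simp_all
  obtain m' k' where "m' < length \<sigma>" and commit': "\<sigma> ! m' = ECommitSt t i'' k' a"
    using uncommitted_store_commits_later[OF run fin \<open>n < length \<sigma>\<close> tid valid store addr uncommitted] .
  moreover have "m < m'"
  proof (rule ccontr)
    assume "\<not> m < m'"
    moreover have "m' \<noteq> m" using commit commit' \<open>i' < i''\<close> by auto
    ultimately have "m' < m" by simp
    with run_same_address_commits_in_order[OF run _ \<open>m < length \<sigma>\<close> commit' commit] assms(7,8)
    show False by simp
  qed
  ultimately show ?thesis using that by blast
qed

lemma reads_early_imp_commit_after_load:
  assumes run: "is_run P ss \<sigma>" and fin: "final P (ss ! length \<sigma>)"
    and "reads_early P ss \<sigma> t i i'"
  shows "\<exists>n m k a. n < m \<and> m < length \<sigma> \<and> \<sigma> ! n = ELoad t i a \<and> \<sigma> ! m = ECommitSt t i' k a \<and>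
    0 < i' \<and> i' < i \<and> (\<forall>j k'. i' < j \<and> j < i \<longrightarrow> ECommitSt t j k' a \<notin> set (drop (Suc m) \<sigma>))"
proof -
  obtain n a where n: "n < length \<sigma>" and load: "\<sigma> ! n = ELoad t i a"
    and early: "early_read_step P (ss ! n) t i a i' (ss ! Suc n)"
    using assms(3) unfolding reads_early_def by blast
  from early have tid: "is_tid P t" and valid_i': "valid_idx (ss ! n) t i'" and "i' < i"
    and store: "is_store (cmd_of (ss ! n) t i')" and addr: "addr P (ss ! n) t i' = Some a"
    and uncommitted: "i' \<notin> C (rt (ss ! n) t)"
    unfolding early_read_step_def by simp_all
  obtain m k where m: "n \<le> m" "m < length \<sigma>" and commit: "\<sigma> ! m = ECommitSt t i' k a"
    using uncommitted_store_commits_later[OF run fin n tid valid_i' store addr uncommitted] .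
  have "n < m" using m load commit by (cases "n = m") auto
  moreover have "ECommitSt t j k' a \<notin> set (drop (Suc m) \<sigma>)" if "i' < j" "j < i" for j k'
  proof
    assume "ECommitSt t j k' a \<in> set (drop (Suc m) \<sigma>)"
    then obtain p where "Suc m \<le> p" "p < length \<sigma>" "\<sigma> ! p = ECommitSt t j k' a"
      unfolding in_set_drop_conv_nth by blast
    with early_read_no_intervening_commit[OF run early, of p j k'] m that show False by simp
  qed
  moreover have "0 < i'" using valid_i' by (simp add: valid_idx_def)
  ultimately show ?thesis using m load commit \<open>i' < i\<close> by blast
qed

lemma commit_after_load_imp_reads_early:
  assumes run: "is_run P ss \<sigma>" and fin: "final P (ss ! length \<sigma>)"
    and "n < m" and "m < length \<sigma>"
    and load: "\<sigma> ! n = ELoad t i a" and commit: "\<sigma> ! m = ECommitSt t i' k a"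
    and "0 < i'" and "i' < i"
    and later: "\<And>j k'. i' < j \<Longrightarrow> j < i \<Longrightarrow> ECommitSt t j k' a \<notin> set (drop (Suc m) \<sigma>)"
  shows "reads_early P ss \<sigma> t i i'"
proof -
  have n: "n < length \<sigma>" using assms(3,4) by simp
  have "step P (ss ! n) (ELoad t i a) (ss ! Suc n)"
    using run_step[OF run n] load by simp
  then obtain i'' where early: "early_read_step P (ss ! n) t i a i'' (ss ! Suc n)"
    by (rule step_ELoadE)
      (use memory_read_not_before_older_store_commit[OF run fin _ assms(3,4) commit assms(7,8)] in blast)
  consider "i'' = i'" | "i'' < i'" | "i' < i''" by linarith
  then show ?thesis
  proof cases
    case 1
    with early n load show ?thesis unfolding reads_early_def by blast
  next
    case 2
    with early_read_no_intervening_commit[OF run early, of m i' k] assms(3,4,8) commit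
    show ?thesis by simp
  next
    case 3
    obtain m' k' where "m < m'" "m' < length \<sigma>" "\<sigma> ! m' = ECommitSt t i'' k' a"
      using early_read_from_younger_store[OF run fin early n assms(4) commit assms(7) 3] .
    then have "ECommitSt t i'' k' a \<in> set (drop (Suc m) \<sigma>)"
      unfolding in_set_drop_conv_nth by (intro exI[of _ m']) simp
    moreover have "i'' < i" using early by (simp add: early_read_step_def)
    ultimately show ?thesis using later 3 by blast
  qed
qed

theorem lemma4:
  fixes P :: "('q, 'd::{zero,finite}, 'r::finite) program"
    and \<sigma> :: "('q, 'd, 'r) event list"
    and ss :: "('q, 'd, 'r) pstate list"
  assumes "\<forall>T\<in>set P. finite (ttrans T)"
    and "\<sigma> \<in> C_Power P"
    and "is_run P ss \<sigma>" and "final P (last ss)"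
  shows "reads_early P ss \<sigma> t i i' \<longleftrightarrow>
    (\<exists>\<sigma>1 \<sigma>2 \<sigma>3 k a. \<sigma> = \<sigma>1 @ [ELoad t i a] @ \<sigma>2 @ [ECommitSt t i' k a] @ \<sigma>3 \<and>
       i' \<in> {1..i - 1} \<and>
       (\<forall>j k'. j \<in> {i' + 1..i - 1} \<longrightarrow> ECommitSt t j k' a \<notin> set \<sigma>3))"
proof -
  have "ss \<noteq> []" and "length ss = Suc (length \<sigma>)" using assms(3) by (auto simp: is_run_def)
  with assms(4) have fin: "final P (ss ! length \<sigma>)" by (simp add: last_conv_nth)
  have intervals: "i' \<in> {1..i - 1} \<longleftrightarrow> 0 < i' \<and> i' < i" "\<And>j. j \<in> {i' + 1..i - 1} \<longleftrightarrow> i' < j \<and> j < i"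
    by auto
  let ?later = "\<lambda>a zs. 0 < i' \<and> i' < i \<and> (\<forall>j k'. i' < j \<and> j < i \<longrightarrow> ECommitSt t j k' a \<notin> set zs)"
  have "reads_early P ss \<sigma> t i i' \<longleftrightarrow>
    (\<exists>k a n m. n < m \<and> m < length \<sigma> \<and> \<sigma> ! n = ELoad t i a \<and> \<sigma> ! m = ECommitSt t i' k a \<and>
      ?later a (drop (Suc m) \<sigma>))" (is "_ \<longleftrightarrow> ?indices")
  proof
    assume "reads_early P ss \<sigma> t i i'"
    from reads_early_imp_commit_after_load[OF assms(3) fin this] show ?indices by blast
  next
    assume ?indices
    then show "reads_early P ss \<sigma> t i i'"
      using commit_after_load_imp_reads_early[OF assms(3) fin] by blast
  qed
  also have "\<dots> \<longleftrightarrow> (\<exists>k a \<sigma>1 \<sigma>2 \<sigma>3. \<sigma> = \<sigma>1 @ [ELoad t i a] @ \<sigma>2 @ [ECommitSt t i' k a] @ \<sigma>3 \<and>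
      ?later a \<sigma>3)"
    by (simp only: append_two_singletons_conv_nth)
  finally show ?thesis unfolding intervals by blast
qed

end
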